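(* Let $\mathcal{D}[t]\subset\mathcal{H}\subset\mathcal{D}^\times[t^\times]$ be a rigged Hilbert space with $\mathcal{D}[t]$ complete and reflexive, and let $\{\zeta_n\}$ be a sequence in $\mathcal{D}^\times$. If $\{\zeta_n\}$ possesses a biorthogonal sequence $\{\xi_n\}\subset\mathcal{D}$ (i.e. $\langle\zeta_n,\xi_k\rangle=\delta_{n,k}$ for all $n,k$) which is total in $\mathcal{D}$ and Riesz-Fischer-like, then $\{\zeta_n\}$ is a Bessel-like sequence.
   Context: A rigged Hilbert space $\mathcal{D}[t]\subset\mathcal{H}\subset\mathcal{D}^\times[t^\times]$: $\mathcal{D}$ is a dense subspace of the Hilbert space $\mathcal{H}$ with a locally convex topology $t$ finer than the norm topology, $\mathcal{D}^\times$ is the space of continuous conjugate-linear functionals on $\mathcal{D}[t]$ with the strong dual topology $t^\times=\beta(\mathcal{D}^\times,\mathcal{D})$, $\mathcal{H}\subset\mathcal{D}^\times$, and the duality form $\langle\Phi,\eta\rangle$ (value of $\Phi\in\mathcal{D}^\times$ at $\eta\in\mathcal{D}$) extends the inner product. A sequence is total if its linear span is dense in $\mathcal{D}[t]$. $\mathcal{L}(\mathcal{D},\mathcal{D}^\times)$ denotes the continuous linear maps $\mathcal{D}[t]\to\mathcal{D}^\times[t^\times]$. $\mathcal{C}(\mathcal{D},\mathcal{H})$ is the set of $X\in\mathcal{L}(\mathcal{D},\mathcal{D}^\times)$ mapping $\mathcal{D}$ into $\mathcal{H}$ continuously from $\mathcal{D}[t]$ into $\mathcal{H}$. A sequence $\{\xi_n\}\subset\mathcal{D}$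 is Riesz-Fischer-like if for every orthonormal basis $\{e_n\}$ of $\mathcal{H}$ there exists $S\in\mathcal{C}(\mathcal{D},\mathcal{H})$ with $S\xi_n=e_n$ for all $n$. A sequence $\{\zeta_n\}\subset\mathcal{D}^\times$ is Bessel-like if for every bounded subset $\mathcal{M}$ of $\mathcal{D}[t]$, $\sup_{\eta\in\mathcal{M}}\sum_{k=1}^\infty|\langle\zeta_k,\eta\rangle|^2<\infty$. *)

theory Defs
  imports "HOL-Analysis.Analysis"
begin

text \<open>J plays the role of multiplication by the imaginary unit.\<close>

definition complex_structure :: "('h::real_inner \<Rightarrow> 'h) \<Rightarrow> bool" where
  "complex_structure J \<longleftrightarrow> linear J \<and> (\<forall>x. J (J x) = - x) \<and> (\<forall>x y. J x \<bullet> J y = x \<bullet> y)"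

definition cscale :: "('h::real_vector \<Rightarrow> 'h) \<Rightarrow> complex \<Rightarrow> 'h \<Rightarrow> 'h" where
  "cscale J c x = Re c *\<^sub>R x + Im c *\<^sub>R J x"

text \<open>Complex inner product: linear in the first, conjugate-linear in the second argument.\<close>
definition cinner :: "('h::real_inner \<Rightarrow> 'h) \<Rightarrow> 'h \<Rightarrow> 'h \<Rightarrow> complex" where
  "cinner J x y = complex_of_real (x \<bullet> y) + \<i> * complex_of_real (x \<bullet> J y)"

definition csubspace :: "('h::real_vector \<Rightarrow> 'h) \<Rightarrow> 'h set \<Rightarrow> bool" where
  "csubspace J D \<longleftrightarrow> 0 \<in> D \<and> (\<forall>x\<in>D. \<forall>y\<in>D. x + y \<in> D) \<and> (\<forall>c. \<forall>x\<in>D. cscale J c x \<in> D)"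

definition seminorm_on :: "(complex \<Rightarrow> 'a \<Rightarrow> 'a) \<Rightarrow> 'a::plus set \<Rightarrow> ('a \<Rightarrow> real) \<Rightarrow> bool" where
  "seminorm_on sc A p \<longleftrightarrow> (\<forall>x\<in>A. 0 \<le> p x) \<and> (\<forall>x\<in>A. \<forall>y\<in>A. p (x + y) \<le> p x + p y)
     \<and> (\<forall>c. \<forall>x\<in>A. p (sc c x) = cmod c * p x)"

text \<open>q is continuous on A for the locally convex topology generated by the family P.\<close>
definition sn_dominated :: "('a \<Rightarrow> real) set \<Rightarrow> 'a set \<Rightarrow> ('a \<Rightarrow> real) \<Rightarrow> bool" where
  "sn_dominated P A q \<longleftrightarrow> (\<exists>F. F \<subseteq> P \<and> finite F \<and> (\<exists>C. \<forall>x\<in>A. q x \<le> C * (\<Sum>p\<in>F. p x)))"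

definition lc_bounded :: "('a \<Rightarrow> real) set \<Rightarrow> 'a set \<Rightarrow> 'a set \<Rightarrow> bool" where
  "lc_bounded P A M \<longleftrightarrow> M \<subseteq> A \<and> (\<forall>p\<in>P. \<exists>C. \<forall>x\<in>M. p x \<le> C)"

definition lc_complete :: "('a::ab_group_add \<Rightarrow> real) set \<Rightarrow> 'a set \<Rightarrow> bool" where
  "lc_complete P D \<longleftrightarrow> (\<forall>F. F \<noteq> bot \<and> F \<le> principal D \<and>
      (\<forall>p\<in>P. \<forall>\<epsilon>>0. eventually (\<lambda>(x, y). p (x - y) < \<epsilon>) (F \<times>\<^sub>F F))
      \<longrightarrow> (\<exists>x\<in>D. \<forall>p\<in>P. \<forall>\<epsilon>>0. eventually (\<lambda>y. p (y - x) < \<epsilon>) F))"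

text \<open>The Hilbert space H is the whole type; D a dense complex subspace; t is generated by
  the family of seminorms P and is finer than the norm topology.\<close>
definition rigged_hilbert :: "('h::{real_inner,complete_space} \<Rightarrow> 'h) \<Rightarrow> 'h set \<Rightarrow> ('h \<Rightarrow> real) set \<Rightarrow> bool" where
  "rigged_hilbert J D P \<longleftrightarrow> complex_structure J \<and> csubspace J D \<and> closure D = UNIV
     \<and> (\<forall>p\<in>P. seminorm_on (cscale J) D p) \<and> sn_dominated P D norm"

text \<open>D^\<times>: continuous conjugate-linear functionals on D[t] (extended by 0 outside D).\<close>
definition dualx :: "('h::real_inner \<Rightarrow> 'h) \<Rightarrow> 'h set \<Rightarrow> ('h \<Rightarrow> real) set \<Rightarrow> ('h \<Rightarrow> complex) set" where
  "dualx J D P = {\<Phi>. (\<forall>x\<in>D. \<forall>y\<in>D. \<Phi> (x + y) = \<Phi> x + \<Phi> y)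
      \<and> (\<forall>c. \<forall>x\<in>D. \<Phi> (cscale J c x) = cnj c * \<Phi> x)
      \<and> sn_dominated P D (\<lambda>x. cmod (\<Phi> x)) \<and> (\<forall>x. x \<notin> D \<longrightarrow> \<Phi> x = 0)}"

text \<open>Seminorms of the strong dual topology t^\<times> = beta(D^\<times>, D).\<close>
definition strong_dual_sn :: "('h::real_inner \<Rightarrow> 'h) \<Rightarrow> 'h set \<Rightarrow> ('h \<Rightarrow> real) set \<Rightarrow> (('h \<Rightarrow> complex) \<Rightarrow> real) set" where
  "strong_dual_sn J D P = {(\<lambda>\<Phi>. SUP \<eta>\<in>M. cmod (\<Phi> \<eta>)) | M. M \<noteq> {} \<and> lc_bounded P D M}"

definition bidual :: "('h::real_inner \<Rightarrow> 'h) \<Rightarrow> 'h set \<Rightarrow> ('h \<Rightarrow> real) set \<Rightarrow> (('h \<Rightarrow> complex) \<Rightarrow> complex) set" where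
  "bidual J D P = {F. (\<forall>\<Phi>\<in>dualx J D P. \<forall>\<Psi>\<in>dualx J D P. F (\<lambda>x. \<Phi> x + \<Psi> x) = F \<Phi> + F \<Psi>)
      \<and> (\<forall>c. \<forall>\<Phi>\<in>dualx J D P. F (\<lambda>x. c * \<Phi> x) = c * F \<Phi>)
      \<and> sn_dominated (strong_dual_sn J D P) (dualx J D P) (\<lambda>\<Phi>. cmod (F \<Phi>))}"

text \<open>Seminorms of the strong topology beta(D, D^\<times>) on D.\<close>
definition strong_sn_on_D :: "('h::real_inner \<Rightarrow> 'h) \<Rightarrow> 'h set \<Rightarrow> ('h \<Rightarrow> real) set \<Rightarrow> ('h \<Rightarrow> real) set" where
  "strong_sn_on_D J D P = {(\<lambda>\<eta>. SUP \<Phi>\<in>B. cmod (\<Phi> \<eta>)) | B. B \<noteq> {} \<and>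
      lc_bounded (strong_dual_sn J D P) (dualx J D P) B}"

text \<open>Reflexive: the canonical map of D into the dual of D^\<times>[t^\<times>] is onto, and t coincides
  with the strong topology beta(D, D^\<times>) (i.e. the canonical map is a topological
  isomorphism onto the strong bidual).\<close>
definition lc_reflexive :: "('h::real_inner \<Rightarrow> 'h) \<Rightarrow> 'h set \<Rightarrow> ('h \<Rightarrow> real) set \<Rightarrow> bool" where
  "lc_reflexive J D P \<longleftrightarrow> (\<forall>F\<in>bidual J D P. \<exists>\<eta>\<in>D. \<forall>\<Phi>\<in>dualx J D P. F \<Phi> = \<Phi> \<eta>)
     \<and> (\<forall>q\<in>strong_sn_on_D J D P. sn_dominated P D q)
     \<and> (\<forall>p\<in>P. sn_dominated (strong_sn_on_D J D P) D p)"

definition emb :: "('h::real_inner \<Rightarrow> 'h) \<Rightarrow> 'h set \<Rightarrow> 'h \<Rightarrow> ('h \<Rightarrow> complex)" where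
  "emb J D \<xi> = (\<lambda>\<eta>. if \<eta> \<in> D then cinner J \<xi> \<eta> else 0)"

definition total_in :: "('h::real_inner \<Rightarrow> 'h) \<Rightarrow> 'h set \<Rightarrow> ('h \<Rightarrow> real) set \<Rightarrow> (nat \<Rightarrow> 'h) \<Rightarrow> bool" where
  "total_in J D P \<xi> \<longleftrightarrow> (\<forall>x\<in>D. \<forall>F. F \<subseteq> P \<and> finite F \<longrightarrow> (\<forall>\<epsilon>>0. \<exists>n c.
      (\<Sum>p\<in>F. p (x - (\<Sum>i<n. cscale J (c i) (\<xi> i)))) < \<epsilon>))"

definition onb :: "('h::real_inner \<Rightarrow> 'h) \<Rightarrow> (nat \<Rightarrow> 'h) \<Rightarrow> bool" where
  "onb J e \<longleftrightarrow> (\<forall>n m. cinner J (e n) (e m) = (if n = m then 1 else 0))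
     \<and> (\<forall>x. \<forall>\<epsilon>>0. \<exists>n c. norm (x - (\<Sum>i<n. cscale J (c i) (e i))) < \<epsilon>)"

text \<open>C(D,H): elements of L(D,D^\<times>) mapping D into H continuously from D[t] into H.\<close>
definition in_CDH :: "('h::real_inner \<Rightarrow> 'h) \<Rightarrow> 'h set \<Rightarrow> ('h \<Rightarrow> real) set \<Rightarrow> ('h \<Rightarrow> 'h) \<Rightarrow> bool" where
  "in_CDH J D P S \<longleftrightarrow> (\<forall>x\<in>D. \<forall>y\<in>D. S (x + y) = S x + S y)
     \<and> (\<forall>c. \<forall>x\<in>D. S (cscale J c x) = cscale J c (S x))
     \<and> (\<forall>x\<in>D. emb J D (S x) \<in> dualx J D P)
     \<and> (\<forall>q\<in>strong_dual_sn J D P. sn_dominated P D (\<lambda>x. q (emb J D (S x))))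
     \<and> sn_dominated P D (\<lambda>x. norm (S x))"

definition riesz_fischer_like :: "('h::real_inner \<Rightarrow> 'h) \<Rightarrow> 'h set \<Rightarrow> ('h \<Rightarrow> real) set \<Rightarrow> (nat \<Rightarrow> 'h) \<Rightarrow> bool" where
  "riesz_fischer_like J D P \<xi> \<longleftrightarrow> (\<forall>e. onb J e \<longrightarrow> (\<exists>S. in_CDH J D P S \<and> (\<forall>n. S (\<xi> n) = e n)))"

definition bessel_like :: "'h set \<Rightarrow> ('h \<Rightarrow> real) set \<Rightarrow> (nat \<Rightarrow> 'h \<Rightarrow> complex) \<Rightarrow> bool" where
  "bessel_like D P \<zeta> \<longleftrightarrow> (\<forall>M. lc_bounded P D M \<longrightarrow>
     (\<exists>C. \<forall>\<eta>\<in>M. summable (\<lambda>k. (cmod (\<zeta> k \<eta>))\<^sup>2) \<and> (\<Sum>k. (cmod (\<zeta> k \<eta>))\<^sup>2) \<le> C))"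

end

theory Submission
  imports Defs
begin

text \<open>Biorthogonality makes \<open>\<xi>\<close> complex-linearly independent, so complex Gram-Schmidt turns it
  into an orthonormal sequence \<open>e\<close> with the same finite spans. Since \<open>\<xi>\<close> is total in \<open>D[t]\<close>,
  \<open>t\<close> is finer than the norm topology and \<open>D\<close> is dense, \<open>e\<close> is an orthonormal basis, and the
  Riesz-Fischer-like property yields \<open>S \<in> C(D,H)\<close> with \<open>S \<xi>\<^sub>n = e\<^sub>n\<close>. The functionals \<open>\<zeta>\<^sub>n\<close>
  and \<open>\<langle>e\<^sub>n, S \<cdot>\<rangle>\<close> are continuous and conjugate-linear on \<open>D[t]\<close> and agree on the total
  sequence \<open>\<xi>\<close>, so they coincide on \<open>D\<close>. Bessel's inequality then bounds
  \<open>\<Sum>\<^sub>n |\<zeta>\<^sub>n \<eta>|\<^sup>2\<close> by \<open>\<parallel>S \<eta>\<parallel>\<^sup>2\<close>, which is bounded on bounded subsets of \<open>D[t]\<close> by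
  continuity of \<open>S\<close>.\<close>

subsection \<open>The complex inner product\<close>

lemma complex_structure_linear: "complex_structure J \<Longrightarrow> linear J"
  by (simp add: complex_structure_def)

lemma complex_structure_J_J: "complex_structure J \<Longrightarrow> J (J x) = - x"
  by (simp add: complex_structure_def)

lemma complex_structure_inner_J_J: "complex_structure J \<Longrightarrow> J x \<bullet> J y = x \<bullet> y"
  by (simp add: complex_structure_def)

lemma inner_J_right:
  assumes "complex_structure J" shows "x \<bullet> J y = - (J x \<bullet> y)"
  using complex_structure_inner_J_J[OF assms, of x "J y"] complex_structure_J_J[OF assms, of y]
  by simp

lemma inner_J_self: "complex_structure J \<Longrightarrow> x \<bullet> J x = 0"
  using inner_J_right[of J x x] by (simp add: inner_commute)

lemma cscale_simps:
  "cscale J (c + d) x = cscale J c x + cscale J d x"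
  "cscale J 0 x = 0" "cscale J 1 x = x" "cscale J \<i> x = J x"
  "cscale J (complex_of_real r) x = r *\<^sub>R x"
  by (auto simp: cscale_def algebra_simps)

lemma cinner_commute:
  assumes "complex_structure J" shows "cinner J y x = cnj (cinner J x y)"
  using inner_J_right[OF assms, of y x] by (simp add: cinner_def complex_eq_iff inner_commute)

lemma Re_cinner [simp]: "Re (cinner J x y) = x \<bullet> y"
  by (simp add: cinner_def)

lemma cinner_self: "complex_structure J \<Longrightarrow> cinner J x x = complex_of_real ((norm x)\<^sup>2)"
  by (simp add: cinner_def inner_J_self power2_norm_eq_inner)

lemma cinner_add_left: "cinner J (x + y) z = cinner J x z + cinner J y z"
  by (simp add: cinner_def inner_add_left algebra_simps)

lemma cinner_diff_left: "cinner J (x - y) z = cinner J x z - cinner J y z"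
  by (simp add: cinner_def inner_diff_left algebra_simps)

lemma cinner_scaleR_left: "cinner J (r *\<^sub>R x) y = complex_of_real r * cinner J x y"
  by (simp add: cinner_def algebra_simps)

lemma cinner_cscale_left:
  assumes "complex_structure J" shows "cinner J (cscale J c x) y = c * cinner J x y"
proof -
  have "J x \<bullet> y = - (x \<bullet> J y)"
    using inner_J_right[OF assms, of x y] by simp
  moreover have "J x \<bullet> J y = x \<bullet> y"
    by (rule complex_structure_inner_J_J[OF assms])
  ultimately show ?thesis
    by (simp add: cinner_def cscale_def complex_eq_iff inner_add_left algebra_simps)
qed

lemma cinner_zero_left [simp]: "cinner J 0 y = 0"
  by (simp add: cinner_def)

lemma cinner_sum_left: "cinner J (\<Sum>i\<in>A. f i) y = (\<Sum>i\<in>A. cinner J (f i) y)"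
  by (induction A rule: infinite_finite_induct) (simp_all add: cinner_add_left)

lemma cinner_add_right:
  "complex_structure J \<Longrightarrow> cinner J x (y + z) = cinner J x y + cinner J x z"
  by (simp add: cinner_def inner_add_right linear_add[OF complex_structure_linear] algebra_simps)

lemma cinner_zero_right [simp]: "complex_structure J \<Longrightarrow> cinner J x 0 = 0"
  by (simp add: cinner_def linear_0[OF complex_structure_linear])

lemma cinner_cscale_right:
  assumes "complex_structure J" shows "cinner J x (cscale J c y) = cnj c * cinner J x y"
proof -
  have J_cscale: "J (cscale J c y) = Re c *\<^sub>R J y - Im c *\<^sub>R y"
    using complex_structure_linear[OF assms] complex_structure_J_J[OF assms]
    by (simp add: cscale_def linear_add linear_scale)
  show ?thesis
    unfolding cinner_def J_cscale by (simp add: cscale_def complex_eq_iff inner_add_right inner_diff_right algebra_simps)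
qed

lemma cinner_sum_right:
  "complex_structure J \<Longrightarrow> cinner J x (\<Sum>i\<in>A. f i) = (\<Sum>i\<in>A. cinner J x (f i))"
  by (induction A rule: infinite_finite_induct) (simp_all add: cinner_add_right)

lemma cmod_cinner_le:
  assumes "complex_structure J" shows "cmod (cinner J x y) \<le> 2 * norm x * norm y"
proof -
  have "cmod (cinner J x y) \<le> \<bar>x \<bullet> y\<bar> + \<bar>x \<bullet> J y\<bar>"
    using norm_triangle_ineq[of "complex_of_real (x \<bullet> y)" "\<i> * complex_of_real (x \<bullet> J y)"]
    by (simp add: cinner_def norm_mult)
  also have "\<dots> \<le> norm x * norm y + norm x * norm (J y)"
    by (intro add_mono Cauchy_Schwarz_ineq2)
  also have "norm (J y) = norm y"
    using complex_structure_inner_J_J[OF assms, of y y] by (simp add: norm_eq_sqrt_inner)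
  finally show ?thesis by linarith
qed

subsection \<open>Complex spans\<close>

text \<open>\<open>J\<close> is multiplication by \<open>\<i>\<close>, so the complex span of \<open>S\<close> is the real span of \<open>S \<union> J ` S\<close>.\<close>

definition cspan :: "('h::real_vector \<Rightarrow> 'h) \<Rightarrow> 'h set \<Rightarrow> 'h set" where
  "cspan J S = span (S \<union> J ` S)"

lemma cspan_superset: "S \<subseteq> cspan J S"
  by (auto simp: cspan_def intro: span_base)

lemma subspace_cspan: "subspace (cspan J S)"
  by (simp add: cspan_def)

lemma cspan_J:
  assumes cs: "complex_structure J" and x: "x \<in> cspan J S"
  shows "J x \<in> cspan J S"
proof -
  have "J ` cspan J S = span (J ` (S \<union> J ` S))"
    unfolding cspan_def by (simp add: span_linear_image[OF complex_structure_linear[OF cs]])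
  also have "\<dots> \<subseteq> cspan J S"
    unfolding cspan_def
  proof (intro span_minimal subspace_span image_subsetI)
    fix y assume "y \<in> S \<union> J ` S"
    then consider "y \<in> S" | s where "s \<in> S" "y = J s" by blast
    then show "J y \<in> span (S \<union> J ` S)"
    proof cases
      case 1 then show ?thesis by (simp add: span_base)
    next
      case 2 then show ?thesis by (simp add: complex_structure_J_J[OF cs] span_base span_neg)
    qed
  qed
  finally show ?thesis using x by blast
qed

lemma cspan_cscale: "complex_structure J \<Longrightarrow> x \<in> cspan J S \<Longrightarrow> cscale J c x \<in> cspan J S"
  unfolding cscale_def by (simp add: subspace_cspan subspace_add subspace_scale cspan_J)

lemma cspan_sum_cscale:
  fixes v :: "nat \<Rightarrow> 'h::real_inner"
  shows "complex_structure J \<Longrightarrow> (\<Sum>i<n. cscale J (c i) (v i)) \<in> cspan J (v ` {..<n})"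
  by (intro subspace_sum[OF subspace_cspan] cspan_cscale) (auto intro: cspan_superset[THEN subsetD])

lemma cspan_subset:
  assumes cs: "complex_structure J" and S: "S \<subseteq> cspan J T"
  shows "cspan J S \<subseteq> cspan J T"
  unfolding cspan_def[of J S]
  using S cspan_J[OF cs] by (intro span_minimal subspace_cspan) auto

lemma cspan_mono: "S \<subseteq> T \<Longrightarrow> cspan J S \<subseteq> cspan J T"
  unfolding cspan_def by (intro span_mono) blast

lemma cspan_imp_sum_cscale:
  fixes v :: "nat \<Rightarrow> 'h::real_inner"
  assumes cs: "complex_structure J" and x: "x \<in> cspan J (v ` {..<n})"
  shows "\<exists>c. x = (\<Sum>i<n. cscale J (c i) (v i))"
proof -
  define R where "R = range (\<lambda>c. \<Sum>i<n. cscale J (c i) (v i))"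
  have "subspace R"
    unfolding subspace_def R_def
  proof (intro conjI ballI allI)
    show "0 \<in> range (\<lambda>c. \<Sum>i<n. cscale J (c i) (v i))"
      by (rule range_eqI[of _ _ "\<lambda>_. 0"]) (simp add: cscale_simps)
    fix x y assume "x \<in> range (\<lambda>c. \<Sum>i<n. cscale J (c i) (v i))"
      and "y \<in> range (\<lambda>c. \<Sum>i<n. cscale J (c i) (v i))"
    then obtain c d where "x = (\<Sum>i<n. cscale J (c i) (v i))" "y = (\<Sum>i<n. cscale J (d i) (v i))"
      by blast
    then show "x + y \<in> range (\<lambda>c. \<Sum>i<n. cscale J (c i) (v i))"
      by (intro range_eqI[of _ _ "\<lambda>i. c i + d i"]) (simp add: cscale_simps sum.distrib)
  next
    fix r :: real and x assume "x \<in> range (\<lambda>c. \<Sum>i<n. cscale J (c i) (v i))"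
    then obtain c where "x = (\<Sum>i<n. cscale J (c i) (v i))" by blast
    moreover have "r *\<^sub>R cscale J a y = cscale J (complex_of_real r * a) y" for a y
      by (simp add: cscale_def scaleR_add_right)
    ultimately show "r *\<^sub>R x \<in> range (\<lambda>c. \<Sum>i<n. cscale J (c i) (v i))"
      by (intro range_eqI[of _ _ "\<lambda>i. complex_of_real r * c i"]) (simp add: scaleR_sum_right)
  qed
  moreover have gen: "cscale J a (v k) \<in> R" if "k < n" for a k
  proof -
    have "(\<Sum>i<n. cscale J (if i = k then a else 0) (v i)) = (\<Sum>i<n. if i = k then cscale J a (v k) else 0)"
      by (rule sum.cong) (auto simp: cscale_simps)
    also have "\<dots> = cscale J a (v k)"
      using that by simp
    finally have "(\<Sum>i<n. cscale J (if i = k then a else 0) (v i)) = cscale J a (v k)" .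
    then show ?thesis
      unfolding R_def by (intro range_eqI[where x="\<lambda>i. if i = k then a else 0"]) simp
  qed
  then have "v ` {..<n} \<union> J ` v ` {..<n} \<subseteq> R"
    using gen[of _ 1] gen[of _ \<i>] by (auto simp: cscale_simps)
  ultimately have "cspan J (v ` {..<n}) \<subseteq> R"
    unfolding cspan_def by (rule span_minimal[rotated])
  then show ?thesis using x R_def by auto
qed

lemma csubspace_subspace:
  assumes "csubspace J D" shows "subspace D"
  using assms cscale_simps(5)[of J] unfolding csubspace_def subspace_def by metis

lemma csubspace_J: "csubspace J D \<Longrightarrow> x \<in> D \<Longrightarrow> J x \<in> D"
  using cscale_simps(4)[of J x] unfolding csubspace_def by metis

lemma csubspace_cspan:
  assumes "csubspace J D" and "S \<subseteq> D" shows "cspan J S \<subseteq> D"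
  unfolding cspan_def using assms csubspace_J[OF assms(1)]
  by (intro span_minimal csubspace_subspace[OF assms(1)]) auto

definition conj_linear_on :: "('h::real_vector \<Rightarrow> 'h) \<Rightarrow> 'h set \<Rightarrow> ('h \<Rightarrow> complex) \<Rightarrow> bool" where
  "conj_linear_on J D \<psi> \<longleftrightarrow> (\<forall>x\<in>D. \<forall>y\<in>D. \<psi> (x + y) = \<psi> x + \<psi> y)
     \<and> (\<forall>c. \<forall>x\<in>D. \<psi> (cscale J c x) = cnj c * \<psi> x)"

lemma conj_linear_on_diff:
  "conj_linear_on J D \<phi> \<Longrightarrow> conj_linear_on J D \<psi> \<Longrightarrow> conj_linear_on J D (\<lambda>x. \<phi> x - \<psi> x)"
  by (simp add: conj_linear_on_def algebra_simps)

lemma conj_linear_on_vanishes_cspan: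
  assumes D: "csubspace J D" and \<psi>: "conj_linear_on J D \<psi>"
    and S: "S \<subseteq> D" and zero: "\<And>s. s \<in> S \<Longrightarrow> \<psi> s = 0" and x: "x \<in> cspan J S"
  shows "\<psi> x = 0"
proof -
  have add: "\<psi> (x + y) = \<psi> x + \<psi> y" if "x \<in> D" "y \<in> D" for x y
    using \<psi> that by (simp add: conj_linear_on_def)
  have scale: "\<psi> (cscale J c x) = cnj c * \<psi> x" if "x \<in> D" for c x
    using \<psi> that by (simp add: conj_linear_on_def)
  have "subspace {x \<in> D. \<psi> x = 0}"
    unfolding subspace_def
  proof (intro conjI ballI allI)
    have "0 \<in> D" using csubspace_subspace[OF D] by (rule subspace_0)
    moreover from this have "\<psi> 0 = \<psi> 0 + \<psi> 0" using add[of 0 0] by simp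
    ultimately show "0 \<in> {x \<in> D. \<psi> x = 0}" by simp
    fix x y assume "x \<in> {x \<in> D. \<psi> x = 0}" "y \<in> {x \<in> D. \<psi> x = 0}"
    then show "x + y \<in> {x \<in> D. \<psi> x = 0}"
      using add subspace_add[OF csubspace_subspace[OF D]] by auto
  next
    fix r :: real and x assume "x \<in> {x \<in> D. \<psi> x = 0}"
    then show "r *\<^sub>R x \<in> {x \<in> D. \<psi> x = 0}"
      using scale[of x "complex_of_real r"] subspace_scale[OF csubspace_subspace[OF D]]
      by (auto simp: cscale_simps)
  qed
  moreover have "S \<union> J ` S \<subseteq> {x \<in> D. \<psi> x = 0}"
    using S zero scale[of _ \<i>] csubspace_J[OF D] by (auto simp: cscale_simps)
  ultimately have "cspan J S \<subseteq> {x \<in> D. \<psi> x = 0}"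
    unfolding cspan_def by (rule span_minimal[rotated])
  then show ?thesis using x by blast
qed

subsection \<open>Bessel's inequality and Gram-Schmidt\<close>

lemma cinner_sum_cscale_orthonormal:
  fixes e :: "nat \<Rightarrow> 'h::real_inner"
  assumes cs: "complex_structure J"
    and ortho: "\<And>k. k < N \<Longrightarrow> cinner J (e k) (e m) = (if k = m then 1 else 0)"
    and m: "m < N"
  shows "cinner J (\<Sum>k<N. cscale J (a k) (e k)) (e m) = a m"
proof -
  have "cinner J (\<Sum>k<N. cscale J (a k) (e k)) (e m) = (\<Sum>k<N. if k = m then a k else 0)"
    unfolding cinner_sum_left by (intro sum.cong refl) (simp add: cinner_cscale_left[OF cs] ortho)
  also have "\<dots> = a m"
    using m by simp
  finally show ?thesis .
qed

lemma bessel_inequality: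
  fixes e :: "nat \<Rightarrow> 'h::real_inner"
  assumes cs: "complex_structure J"
    and ortho: "\<And>k j. cinner J (e k) (e j) = (if k = j then 1 else 0)"
  shows "(\<Sum>k<N. (cmod (cinner J (e k) v))\<^sup>2) \<le> (norm v)\<^sup>2"
proof -
  define a where "a k = cinner J v (e k)" for k
  define w where "w = (\<Sum>k<N. cscale J (a k) (e k))"
  have w_coeff: "cinner J w (e k) = a k" if "k < N" for k
    unfolding w_def using cinner_sum_cscale_orthonormal[OF cs ortho that] .
  have w_right: "cinner J x w = (\<Sum>k<N. cnj (a k) * cinner J x (e k))" for x
    unfolding w_def by (simp add: cinner_sum_right[OF cs] cinner_cscale_right[OF cs])
  have "cinner J (v - w) w = 0"
    by (simp add: w_right cinner_diff_left w_coeff a_def)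
  then have "(v - w) \<bullet> w = 0"
    using Re_cinner[of J "v - w" w] by simp
  then have Pythagoras: "(norm v)\<^sup>2 = (norm (v - w))\<^sup>2 + (norm w)\<^sup>2"
    using norm_add_Pythagorean[of "v - w" w] by (simp add: orthogonal_def)
  have "complex_of_real ((norm w)\<^sup>2) = cinner J w w"
    by (rule cinner_self[OF cs, symmetric])
  also have "\<dots> = (\<Sum>k<N. cnj (a k) * a k)"
    unfolding w_right by (intro sum.cong refl) (simp add: w_coeff)
  also have "\<dots> = complex_of_real (\<Sum>k<N. (cmod (a k))\<^sup>2)"
    unfolding of_real_sum complex_norm_square by (simp add: mult.commute)
  finally have "(norm w)\<^sup>2 = (\<Sum>k<N. (cmod (cinner J (e k) v))\<^sup>2)"
    by (simp only: of_real_eq_iff a_def cinner_commute[OF cs, of "e _" v] complex_mod_cnj)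
  then show ?thesis using Pythagoras by simp
qed

fun cgram_schmidt :: "('h::real_inner \<Rightarrow> 'h) \<Rightarrow> (nat \<Rightarrow> 'h) \<Rightarrow> nat \<Rightarrow> 'h" where
  "cgram_schmidt J \<xi> n =
    (let r = \<xi> n - (\<Sum>k<n. cscale J (cinner J (\<xi> n) (cgram_schmidt J \<xi> k)) (cgram_schmidt J \<xi> k))
     in r /\<^sub>R norm r)"

declare cgram_schmidt.simps [simp del]

text \<open>No hypothesis is needed here: if the residual vanishes, so does \<open>0 /\<^sub>R 0\<close>.\<close>

lemma cgram_schmidt_residual:
  "\<xi> n - (\<Sum>k<n. cscale J (cinner J (\<xi> n) (cgram_schmidt J \<xi> k)) (cgram_schmidt J \<xi> k))
    = norm (\<xi> n - (\<Sum>k<n. cscale J (cinner J (\<xi> n) (cgram_schmidt J \<xi> k)) (cgram_schmidt J \<xi> k)))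
      *\<^sub>R cgram_schmidt J \<xi> n"
  (is "?r = norm ?r *\<^sub>R _")
proof -
  have "cgram_schmidt J \<xi> n = ?r /\<^sub>R norm ?r"
    by (simp only: cgram_schmidt.simps[of J \<xi> n] Let_def)
  then show ?thesis by (cases "?r = 0") simp_all
qed

lemma in_cspan_cgram_schmidt:
  assumes "complex_structure J"
  shows "\<xi> n \<in> cspan J (cgram_schmidt J \<xi> ` {..n})"
proof -
  define e where "e = cgram_schmidt J \<xi>"
  define w where "w = (\<Sum>k<n. cscale J (cinner J (\<xi> n) (e k)) (e k))"
  have "\<xi> n = w + norm (\<xi> n - w) *\<^sub>R e n"
    using cgram_schmidt_residual[of \<xi> n J] by (simp add: w_def e_def algebra_simps)
  moreover have "w \<in> cspan J (e ` {..<n})"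
    unfolding w_def by (rule cspan_sum_cscale[OF assms])
  then have "w \<in> cspan J (e ` {..n})"
    using cspan_mono[of "e ` {..<n}" "e ` {..n}" J] by fastforce
  moreover have "e n \<in> cspan J (e ` {..n})"
    by (rule cspan_superset[THEN subsetD]) simp
  ultimately show ?thesis
    unfolding e_def by (metis subspace_add subspace_cspan subspace_scale)
qed

lemma cgram_schmidt_orthonormal_upto:
  fixes \<xi> :: "nat \<Rightarrow> 'h::real_inner"
  assumes cs: "complex_structure J" and indep: "\<And>n. \<xi> n \<notin> cspan J (\<xi> ` {..<n})"
  defines "e \<equiv> cgram_schmidt J \<xi>"
  shows "(\<forall>k\<le>n. cinner J (e n) (e k) = (if k = n then 1 else 0)) \<and> e n \<in> cspan J (\<xi> ` {..n})"
proof (induction n rule: less_induct)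
  case (less n)
  have ortho: "cinner J (e k) (e j) = (if k = j then 1 else 0)" if "k < n" "j < n" for k j
  proof (cases "j \<le> k")
    case True
    then show ?thesis using less that by simp
  next
    case False
    then have "cinner J (e j) (e k) = 0" using less that by simp
    then show ?thesis using False cinner_commute[OF cs, of "e k" "e j"] by simp
  qed
  define w where "w = (\<Sum>k<n. cscale J (cinner J (\<xi> n) (e k)) (e k))"
  define r where "r = \<xi> n - w"
  have e_n: "e n = r /\<^sub>R norm r"
    unfolding e_def r_def w_def by (simp only: cgram_schmidt.simps[of J \<xi> n] Let_def)
  have "e k \<in> cspan J (\<xi> ` {..<n})" if "k < n" for k
    using less that cspan_mono[of "\<xi> ` {..k}" "\<xi> ` {..<n}" J] by fastforce
  then have w_span: "w \<in> cspan J (\<xi> ` {..<n})"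
    unfolding w_def by (intro subspace_sum[OF subspace_cspan] cspan_cscale[OF cs]) simp
  then have "r \<noteq> 0"
    using indep[of n] by (auto simp: r_def)
  have "cinner J r (e k) = 0" if "k < n" for k
    using cinner_sum_cscale_orthonormal[OF cs ortho[OF _ that] that, of "\<lambda>k. cinner J (\<xi> n) (e k)"]
    by (simp add: r_def w_def cinner_diff_left)
  then have "cinner J (e n) (e k) = (if k = n then 1 else 0)" if "k \<le> n" for k
    using that \<open>r \<noteq> 0\<close> cinner_self[OF cs, of "e n"] e_n
    by (cases "k = n") (simp_all add: cinner_scaleR_left)
  moreover have "e n \<in> cspan J (\<xi> ` {..n})"
    using cspan_superset[of "\<xi> ` {..n}" J] w_span cspan_mono[of "\<xi> ` {..<n}" "\<xi> ` {..n}" J]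
    unfolding e_n r_def
    by (intro subspace_scale[OF subspace_cspan] subspace_diff[OF subspace_cspan]) fastforce+
  ultimately show ?case by blast
qed

lemma cgram_schmidt_orthonormal:
  fixes \<xi> :: "nat \<Rightarrow> 'h::real_inner"
  assumes cs: "complex_structure J" and indep: "\<And>n. \<xi> n \<notin> cspan J (\<xi> ` {..<n})"
  shows "cinner J (cgram_schmidt J \<xi> k) (cgram_schmidt J \<xi> j) = (if k = j then 1 else 0)"
proof (cases "j \<le> k")
  case True
  then show ?thesis using cgram_schmidt_orthonormal_upto[OF cs indep, of k] by simp
next
  case False
  then show ?thesis
    using cgram_schmidt_orthonormal_upto[OF cs indep, of j] cinner_commute[OF cs, of "cgram_schmidt J \<xi> k"]
    by simp
qed

subsection \<open>Continuity with respect to a family of seminorms\<close>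

lemma sn_dominated_add:
  assumes nonneg: "\<forall>p\<in>P. \<forall>x\<in>A. 0 \<le> p x"
    and q1: "sn_dominated P A q1" and q2: "sn_dominated P A q2"
  shows "sn_dominated P A (\<lambda>x. q1 x + q2 x)"
proof -
  obtain F1 C1 where F1: "F1 \<subseteq> P" "finite F1" and C1: "\<forall>x\<in>A. q1 x \<le> C1 * (\<Sum>p\<in>F1. p x)"
    using q1 unfolding sn_dominated_def by blast
  obtain F2 C2 where F2: "F2 \<subseteq> P" "finite F2" and C2: "\<forall>x\<in>A. q2 x \<le> C2 * (\<Sum>p\<in>F2. p x)"
    using q2 unfolding sn_dominated_def by blast
  have bound: "C * (\<Sum>p\<in>F. p x) \<le> \<bar>C\<bar> * (\<Sum>p\<in>F1 \<union> F2. p x)"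
    if "F \<subseteq> F1 \<union> F2" "x \<in> A" for C F x
  proof -
    have "0 \<le> (\<Sum>p\<in>F. p x)"
      using that F1 F2 nonneg by (intro sum_nonneg) blast
    moreover have "(\<Sum>p\<in>F. p x) \<le> (\<Sum>p\<in>F1 \<union> F2. p x)"
      using that F1 F2 nonneg by (intro sum_mono2) auto
    ultimately show ?thesis
      by (meson abs_ge_self abs_ge_zero mult_mono order_trans)
  qed
  have "q1 x + q2 x \<le> (\<bar>C1\<bar> + \<bar>C2\<bar>) * (\<Sum>p\<in>F1 \<union> F2. p x)" if "x \<in> A" for x
  proof -
    have "q1 x \<le> \<bar>C1\<bar> * (\<Sum>p\<in>F1 \<union> F2. p x)"
      using C1 bound[where C=C1 and F=F1] that by (meson order_trans sup_ge1)
    moreover have "q2 x \<le> \<bar>C2\<bar> * (\<Sum>p\<in>F1 \<union> F2. p x)"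
      using C2 bound[where C=C2 and F=F2] that by (meson order_trans sup_ge2)
    ultimately show ?thesis by (simp add: distrib_right)
  qed
  then show ?thesis
    unfolding sn_dominated_def using F1 F2 by (intro exI[of _ "F1 \<union> F2"]) blast
qed

lemma sn_dominated_mult:
  assumes q: "sn_dominated P A q" and "0 \<le> c" and le: "\<And>x. x \<in> A \<Longrightarrow> q' x \<le> c * q x"
  shows "sn_dominated P A q'"
proof -
  obtain F C where F: "F \<subseteq> P" "finite F" and C: "\<forall>x\<in>A. q x \<le> C * (\<Sum>p\<in>F. p x)"
    using q unfolding sn_dominated_def by blast
  have "q' x \<le> (c * C) * (\<Sum>p\<in>F. p x)" if "x \<in> A" for x
    using le[OF that] mult_left_mono[OF C[rule_format, OF that] \<open>0 \<le> c\<close>] by simp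
  then show ?thesis
    unfolding sn_dominated_def using F by blast
qed

lemma sn_dominated_small:
  assumes nonneg: "\<forall>p\<in>P. \<forall>x\<in>A. 0 \<le> p x" and q: "sn_dominated P A q" and "0 < \<epsilon>"
  obtains F \<delta> where "F \<subseteq> P" "finite F" "0 < \<delta>"
    "\<And>x. x \<in> A \<Longrightarrow> (\<Sum>p\<in>F. p x) < \<delta> \<Longrightarrow> q x \<le> \<epsilon>"
proof -
  obtain F C where F: "F \<subseteq> P" "finite F" and C: "\<forall>x\<in>A. q x \<le> C * (\<Sum>p\<in>F. p x)"
    using q unfolding sn_dominated_def by blast
  define \<delta> where "\<delta> = \<epsilon> / (\<bar>C\<bar> + 1)"
  have "0 < \<delta>" using \<open>0 < \<epsilon>\<close> by (simp add: \<delta>_def add_pos_nonneg)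
  moreover have "q x \<le> \<epsilon>" if "x \<in> A" and small: "(\<Sum>p\<in>F. p x) < \<delta>" for x
  proof -
    have s: "0 \<le> (\<Sum>p\<in>F. p x)"
      using F nonneg that by (intro sum_nonneg) auto
    have "q x \<le> \<bar>C\<bar> * (\<Sum>p\<in>F. p x)"
      using C that s by (meson abs_ge_self mult_right_mono order_trans)
    also have "\<dots> \<le> (\<bar>C\<bar> + 1) * \<delta>"
      using s small by (intro mult_mono) auto
    also have "\<dots> = \<epsilon>"
      by (simp add: \<delta>_def add_pos_nonneg)
    finally show ?thesis .
  qed
  ultimately show ?thesis using F that by blast
qed

lemma sn_dominated_bounded:
  assumes nonneg: "\<forall>p\<in>P. \<forall>x\<in>A. 0 \<le> p x" and q: "sn_dominated P A q" and M: "lc_bounded P A M"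
  obtains K where "\<And>x. x \<in> M \<Longrightarrow> q x \<le> K"
proof -
  obtain F C where F: "F \<subseteq> P" "finite F" and C: "\<forall>x\<in>A. q x \<le> C * (\<Sum>p\<in>F. p x)"
    using q unfolding sn_dominated_def by blast
  obtain B where B: "\<forall>p\<in>F. \<forall>x\<in>M. p x \<le> B p"
    using M F unfolding lc_bounded_def by (metis subsetD)
  have "q x \<le> \<bar>C\<bar> * (\<Sum>p\<in>F. B p)" if "x \<in> M" for x
  proof -
    have x: "x \<in> A" using M that by (auto simp: lc_bounded_def)
    have s: "0 \<le> (\<Sum>p\<in>F. p x)"
      using F nonneg x by (intro sum_nonneg) auto
    have "q x \<le> \<bar>C\<bar> * (\<Sum>p\<in>F. p x)"
      using C x s by (meson abs_ge_self mult_right_mono order_trans)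
    also have "\<dots> \<le> \<bar>C\<bar> * (\<Sum>p\<in>F. B p)"
      using B that by (intro mult_left_mono sum_mono) auto
    finally show ?thesis .
  qed
  then show ?thesis using that by blast
qed

lemma conj_linear_on_vanishes_total:
  assumes cs: "complex_structure J" and D: "csubspace J D" and nonneg: "\<forall>p\<in>P. \<forall>x\<in>D. 0 \<le> p x"
    and \<xi>: "\<forall>n. \<xi> n \<in> D" and total: "total_in J D P \<xi>"
    and \<psi>: "conj_linear_on J D \<psi>" and bounded: "sn_dominated P D (\<lambda>x. cmod (\<psi> x))"
    and zero: "\<And>n. \<psi> (\<xi> n) = 0" and x: "x \<in> D"
  shows "\<psi> x = 0"
proof -
  have "cmod (\<psi> x) \<le> 0 + \<epsilon>" if "0 < \<epsilon>" for \<epsilon>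
  proof -
    obtain F \<delta> where F: "F \<subseteq> P" "finite F" "0 < \<delta>"
      and small: "\<And>y. y \<in> D \<Longrightarrow> (\<Sum>p\<in>F. p y) < \<delta> \<Longrightarrow> cmod (\<psi> y) \<le> \<epsilon>"
      using sn_dominated_small[OF nonneg bounded \<open>0 < \<epsilon>\<close>] by blast
    obtain m c where approx: "(\<Sum>p\<in>F. p (x - (\<Sum>i<m. cscale J (c i) (\<xi> i)))) < \<delta>"
      using total x F unfolding total_in_def by blast
    define y where "y = (\<Sum>i<m. cscale J (c i) (\<xi> i))"
    have y_span: "y \<in> cspan J (\<xi> ` {..<m})"
      unfolding y_def by (rule cspan_sum_cscale[OF cs])
    have \<xi>_D: "\<xi> ` {..<m} \<subseteq> D" using \<xi> by blast
    have "y \<in> D" using y_span csubspace_cspan[OF D \<xi>_D] by blast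
    then have xy: "x - y \<in> D" using x subspace_diff[OF csubspace_subspace[OF D]] by blast
    have "\<psi> x = \<psi> (x - y) + \<psi> y"
      using \<psi> xy \<open>y \<in> D\<close> unfolding conj_linear_on_def by (metis diff_add_cancel)
    also have "\<psi> y = 0"
      using conj_linear_on_vanishes_cspan[OF D \<psi> \<xi>_D _ y_span] zero by blast
    finally have "\<psi> x = \<psi> (x - y)" by simp
    then show ?thesis using small[OF xy] approx y_def by simp
  qed
  then have "cmod (\<psi> x) \<le> 0" by (rule field_le_epsilon)
  then show ?thesis by simp
qed

lemma total_in_norm_dense:
  assumes cs: "complex_structure J" and D: "csubspace J D" and nonneg: "\<forall>p\<in>P. \<forall>x\<in>D. 0 \<le> p x"
    and dense: "closure D = UNIV" and norm_bounded: "sn_dominated P D norm"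
    and \<xi>: "\<forall>n. \<xi> n \<in> D" and total: "total_in J D P \<xi>" and "0 < \<epsilon>"
  shows "\<exists>m c. norm (x - (\<Sum>i<m. cscale J (c i) (\<xi> i))) < \<epsilon>"
proof -
  obtain d where d: "d \<in> D" "dist d x < \<epsilon> / 2"
    using dense closure_approachable[of x D] \<open>0 < \<epsilon>\<close> by (metis UNIV_I half_gt_zero)
  obtain F \<delta> where F: "F \<subseteq> P" "finite F" "0 < \<delta>"
    and small: "\<And>y. y \<in> D \<Longrightarrow> (\<Sum>p\<in>F. p y) < \<delta> \<Longrightarrow> norm y \<le> \<epsilon> / 4"
    using sn_dominated_small[OF nonneg norm_bounded, of "\<epsilon> / 4"] \<open>0 < \<epsilon>\<close> by auto
  obtain m c where approx: "(\<Sum>p\<in>F. p (d - (\<Sum>i<m. cscale J (c i) (\<xi> i)))) < \<delta>"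
    using total d F unfolding total_in_def by blast
  define y where "y = (\<Sum>i<m. cscale J (c i) (\<xi> i))"
  have "y \<in> D"
    using cspan_sum_cscale[OF cs] csubspace_cspan[OF D, of "\<xi> ` {..<m}"] \<xi> unfolding y_def by blast
  then have "norm (d - y) \<le> \<epsilon> / 4"
    using small approx d(1) subspace_diff[OF csubspace_subspace[OF D]] y_def by blast
  then have "norm (x - y) < \<epsilon>"
    using d(2) norm_triangle_ineq4[of "x - d" "y - d"] \<open>0 < \<epsilon>\<close>
    by (simp add: dist_norm norm_minus_commute)
  then show ?thesis unfolding y_def by blast
qed

lemma onb_if_spans_dense:
  fixes e \<xi> :: "nat \<Rightarrow> 'h::real_inner"
  assumes cs: "complex_structure J"
    and ortho: "\<And>k j. cinner J (e k) (e j) = (if k = j then 1 else 0)"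
    and \<xi>_span: "\<And>n. \<xi> n \<in> cspan J (e ` {..n})"
    and dense: "\<And>x \<epsilon>. 0 < \<epsilon> \<Longrightarrow> \<exists>m c. norm (x - (\<Sum>i<m. cscale J (c i) (\<xi> i))) < \<epsilon>"
  shows "onb J e"
  unfolding onb_def
proof (intro conjI allI impI)
  fix n m show "cinner J (e n) (e m) = (if n = m then 1 else 0)" by (rule ortho)
next
  fix x :: 'h and \<epsilon> :: real assume "0 < \<epsilon>"
  then obtain m c where approx: "norm (x - (\<Sum>i<m. cscale J (c i) (\<xi> i))) < \<epsilon>"
    using dense by blast
  have "\<xi> ` {..<m} \<subseteq> cspan J (e ` {..<m})"
  proof
    fix y assume "y \<in> \<xi> ` {..<m}"
    then obtain i where "i < m" "y = \<xi> i" by blast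
    moreover have "e ` {..i} \<subseteq> e ` {..<m}" using \<open>i < m\<close> by auto
    ultimately show "y \<in> cspan J (e ` {..<m})"
      using \<xi>_span[of i] cspan_mono[of "e ` {..i}" "e ` {..<m}" J] by blast
  qed
  then have "(\<Sum>i<m. cscale J (c i) (\<xi> i)) \<in> cspan J (e ` {..<m})"
    using cspan_sum_cscale[OF cs] cspan_subset[OF cs] by blast
  then obtain c' where "(\<Sum>i<m. cscale J (c i) (\<xi> i)) = (\<Sum>i<m. cscale J (c' i) (e i))"
    using cspan_imp_sum_cscale[OF cs] by blast
  then show "\<exists>n c. norm (x - (\<Sum>i<n. cscale J (c i) (e i))) < \<epsilon>"
    using approx by metis
qed

lemma dualx_conj_linear_on:
  "\<Phi> \<in> dualx J D P \<Longrightarrow> conj_linear_on J D \<Phi>"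
  by (simp add: dualx_def conj_linear_on_def)

lemma dualx_sn_dominated:
  "\<Phi> \<in> dualx J D P \<Longrightarrow> sn_dominated P D (\<lambda>x. cmod (\<Phi> x))"
  by (simp add: dualx_def)

lemma in_CDH_conj_linear_on_cinner:
  "complex_structure J \<Longrightarrow> in_CDH J D P S \<Longrightarrow> conj_linear_on J D (\<lambda>x. cinner J u (S x))"
  by (simp add: in_CDH_def conj_linear_on_def cinner_add_right cinner_cscale_right)

lemma dualx_eq_cinner_if_eq_on_total:
  assumes cs: "complex_structure J" and D: "csubspace J D" and nonneg: "\<forall>p\<in>P. \<forall>x\<in>D. 0 \<le> p x"
    and \<xi>: "\<forall>n. \<xi> n \<in> D" and total: "total_in J D P \<xi>"
    and \<Phi>: "\<Phi> \<in> dualx J D P" and S: "in_CDH J D P S"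
    and eq: "\<And>n. \<Phi> (\<xi> n) = cinner J u (S (\<xi> n))" and x: "x \<in> D"
  shows "\<Phi> x = cinner J u (S x)"
proof -
  define \<psi> where "\<psi> x = \<Phi> x - cinner J u (S x)" for x
  have "conj_linear_on J D \<psi>"
    unfolding \<psi>_def
    using dualx_conj_linear_on[OF \<Phi>] in_CDH_conj_linear_on_cinner[OF cs S] by (rule conj_linear_on_diff)
  moreover have "sn_dominated P D (\<lambda>x. cmod (\<psi> x))"
  proof (rule sn_dominated_mult)
    show "sn_dominated P D (\<lambda>x. cmod (\<Phi> x) + norm (S x))"
      using S dualx_sn_dominated[OF \<Phi>] by (intro sn_dominated_add[OF nonneg]) (simp_all add: in_CDH_def)
    show "0 \<le> 1 + 2 * norm u" by simp
    fix x
    have "cmod (\<psi> x) \<le> cmod (\<Phi> x) + 2 * norm u * norm (S x)"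
      unfolding \<psi>_def using norm_triangle_ineq4 cmod_cinner_le[OF cs] by (smt (verit))
    also have "\<dots> \<le> (1 + 2 * norm u) * (cmod (\<Phi> x) + norm (S x))"
      by (simp add: algebra_simps)
    finally show "cmod (\<psi> x) \<le> (1 + 2 * norm u) * (cmod (\<Phi> x) + norm (S x))" .
  qed
  ultimately have "\<psi> x = 0"
    by (rule conj_linear_on_vanishes_total[OF cs D nonneg \<xi> total]) (simp_all add: \<psi>_def eq x)
  then show ?thesis by (simp add: \<psi>_def)
qed

lemma bessel_like_if_eq_cinner:
  fixes e :: "nat \<Rightarrow> 'h::real_inner"
  assumes cs: "complex_structure J"
    and ortho: "\<And>k j. cinner J (e k) (e j) = (if k = j then 1 else 0)"
    and nonneg: "\<forall>p\<in>P. \<forall>x\<in>D. 0 \<le> p x" and S: "sn_dominated P D (\<lambda>x. norm (S x))"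
    and eq: "\<And>n x. x \<in> D \<Longrightarrow> \<zeta> n x = cinner J (e n) (S x)"
  shows "bessel_like D P \<zeta>"
  unfolding bessel_like_def
proof (intro allI impI)
  fix M assume M: "lc_bounded P D M"
  then obtain K where K: "\<And>x. x \<in> M \<Longrightarrow> norm (S x) \<le> K"
    using sn_dominated_bounded[OF nonneg S] by blast
  have partial: "(\<Sum>k<N. (cmod (\<zeta> k x))\<^sup>2) \<le> K\<^sup>2" if "x \<in> M" for x N
  proof -
    have "x \<in> D" using M that by (auto simp: lc_bounded_def)
    then have "(\<Sum>k<N. (cmod (\<zeta> k x))\<^sup>2) = (\<Sum>k<N. (cmod (cinner J (e k) (S x)))\<^sup>2)"
      by (simp add: eq)
    also have "\<dots> \<le> (norm (S x))\<^sup>2"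
      by (rule bessel_inequality[OF cs ortho])
    also have "\<dots> \<le> K\<^sup>2"
      using K[OF that] by (intro power_mono) auto
    finally show ?thesis .
  qed
  show "\<exists>C. \<forall>x\<in>M. summable (\<lambda>k. (cmod (\<zeta> k x))\<^sup>2) \<and> (\<Sum>k. (cmod (\<zeta> k x))\<^sup>2) \<le> C"
  proof (intro exI ballI conjI)
    fix x assume "x \<in> M"
    show summable: "summable (\<lambda>k. (cmod (\<zeta> k x))\<^sup>2)"
      using partial[OF \<open>x \<in> M\<close>] by (intro summableI_nonneg_bounded) auto
    show "(\<Sum>k. (cmod (\<zeta> k x))\<^sup>2) \<le> K\<^sup>2"
      using partial[OF \<open>x \<in> M\<close>] by (intro suminf_le_const[OF summable])
  qed
qed

lemma biorthogonal_not_in_cspan: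
  fixes \<xi> :: "nat \<Rightarrow> 'h::real_inner"
  assumes D: "csubspace J D" and \<phi>: "conj_linear_on J D \<phi>" and \<xi>: "\<forall>k. \<xi> k \<in> D"
    and biorth: "\<And>k. \<phi> (\<xi> k) = (if k = n then 1 else 0)"
  shows "\<xi> n \<notin> cspan J (\<xi> ` {..<n})"
proof
  assume "\<xi> n \<in> cspan J (\<xi> ` {..<n})"
  moreover have "\<xi> ` {..<n} \<subseteq> D" using \<xi> by blast
  moreover have "\<phi> y = 0" if y: "y \<in> \<xi> ` {..<n}" for y
  proof -
    obtain k where "k < n" "y = \<xi> k" using y by blast
    then show ?thesis using biorth[of k] by simp
  qed
  ultimately have "\<phi> (\<xi> n) = 0"
    using conj_linear_on_vanishes_cspan[OF D \<phi>] by blast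
  then show False using biorth[of n] by simp
qed

theorem proposition2p17:
  fixes J :: "'h::{real_inner,complete_space} \<Rightarrow> 'h"
    and D :: "'h set" and P :: "('h \<Rightarrow> real) set"
    and \<zeta> :: "nat \<Rightarrow> 'h \<Rightarrow> complex" and \<xi> :: "nat \<Rightarrow> 'h"
  assumes "rigged_hilbert J D P"
    and "lc_complete P D"
    and "lc_reflexive J D P"
    and "\<forall>n. \<zeta> n \<in> dualx J D P"
    and "\<forall>n. \<xi> n \<in> D"
    and "\<forall>n k. \<zeta> n (\<xi> k) = (if n = k then 1 else 0)"
    and "total_in J D P \<xi>"
    and "riesz_fischer_like J D P \<xi>"
  shows "bessel_like D P \<zeta>"
proof -
  note \<zeta> = assms(4) and \<xi> = assms(5) and biorth = assms(6) and total = assms(7)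
  have cs: "complex_structure J" and D: "csubspace J D" and dense: "closure D = UNIV"
    and nonneg: "\<forall>p\<in>P. \<forall>x\<in>D. 0 \<le> p x" and norm_bounded: "sn_dominated P D norm"
    using assms(1) by (auto simp: rigged_hilbert_def seminorm_on_def)
  have indep: "\<xi> n \<notin> cspan J (\<xi> ` {..<n})" for n
    using biorth by (intro biorthogonal_not_in_cspan[OF D dualx_conj_linear_on[OF \<zeta>[rule_format]] \<xi>]) auto
  define e where "e = cgram_schmidt J \<xi>"
  have ortho: "cinner J (e k) (e j) = (if k = j then 1 else 0)" for k j
    unfolding e_def by (rule cgram_schmidt_orthonormal[OF cs indep])
  have "onb J e"
    using ortho unfolding e_def
    by (intro onb_if_spans_dense[OF cs _ in_cspan_cgram_schmidt[OF cs]
          total_in_norm_dense[OF cs D nonneg dense norm_bounded \<xi> total]])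
  then obtain S where S: "in_CDH J D P S" and Se: "\<And>n. S (\<xi> n) = e n"
    using assms(8) unfolding riesz_fischer_like_def by blast
  have "\<zeta> n x = cinner J (e n) (S x)" if "x \<in> D" for n x
    using \<zeta> biorth
    by (intro dualx_eq_cinner_if_eq_on_total[OF cs D nonneg \<xi> total _ S _ that]) (simp_all add: Se ortho)
  then show ?thesis
    using S by (intro bessel_like_if_eq_cinner[OF cs ortho nonneg]) (simp_all add: in_CDH_def)
qed

end
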